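(* The ordinal space $\omega_1+1$ (with the order topology) is not self-selective; that is, there is a lower semicontinuous map $\varphi$ from $\omega_1+1$ to the nonempty closed subsets of $\omega_1+1$ that has no continuous selection.
   Context: For spaces $Y$, $X$, a map $\varphi:Y\to\mathcal P(X)\setminus\{\emptyset\}$ is lower semicontinuous if $\{y:\varphi(y)\cap U\neq\emptyset\}$ is open in $Y$ for every open $U\subseteq X$; a selection is a map $f:Y\to X$ with $f(y)\in\varphi(y)$ for all $y$. A space $X$ is self-selective if every lower semicontinuous map from $X$ to the nonempty closed subsets of $X$ has a continuous selection. *)

theory Defs
  imports "HOL-Analysis.Analysis"
begin

definition lower_semicontinuous :: "('a::topological_space \<Rightarrow> 'b::topological_space set) \<Rightarrow> bool" where
  "lower_semicontinuous \<phi> \<longleftrightarrow> (\<forall>U. open U \<longrightarrow> open {y. \<phi> y \<inter> U \<noteq> {}})"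

definition self_selective :: "('a::topological_space) itself \<Rightarrow> bool" where
  "self_selective (_::'a itself) \<longleftrightarrow>
     (\<forall>\<phi>::'a \<Rightarrow> 'a set.
        (\<forall>x. closed (\<phi> x) \<and> \<phi> x \<noteq> {}) \<and> lower_semicontinuous \<phi> \<longrightarrow>
        (\<exists>f::'a \<Rightarrow> 'a. continuous_on UNIV f \<and> (\<forall>x. f x \<in> \<phi> x)))"

end

theory Submission
  imports Defs
begin

text \<open>Every limit of \<open>\<omega>\<^sub>1 + 1\<close> is either a limit of limits or of the form \<open>\<lambda> + \<omega>\<close>,
  where \<open>\<lambda>\<close> is \<open>0\<close> or a limit. The map sends a limit of limits to itself, \<open>\<lambda> + \<omega>\<close> to
  \<open>{\<lambda>}\<close>, and a point \<open>y\<close> of the gap \<open>(\<lambda>, \<lambda> + \<omega>)\<close> to \<open>[0, d y] \<union> {y}\<close>, where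
  \<open>d y < \<lambda>\<close> converges to \<open>\<lambda>\<close> as \<open>y\<close> tends to \<open>\<lambda> + \<omega>\<close>; this convergence makes the map
  lower semicontinuous.

  A continuous selection \<open>f\<close> must send \<open>\<lambda> + \<omega>\<close> to \<open>\<lambda>\<close>, so some point \<open>y\<close> of the gap
  has \<open>f y \<le> \<lambda>\<close>, whence \<open>f y \<le> d y < \<lambda>\<close>: choosing such a \<open>y\<close> for each \<open>\<lambda>\<close> yields a
  regressive function \<open>g \<lambda> = f y\<close> on the countable limits. Since \<open>f\<close> is the identity at
  limits of limits, continuity there shows that every sublevel set \<open>{\<lambda>. g \<lambda> \<le> \<delta>}\<close> is
  bounded below \<open>\<omega>\<^sub>1\<close>; closing off an \<open>\<omega>\<close>-sequence of these bounds produces a limit of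
  limits \<open>\<lambda>\<close> with \<open>g \<lambda> \<ge> \<lambda>\<close>, a contradiction.\<close>

definition order_limit :: "'a::linorder \<Rightarrow> bool" where
  "order_limit x \<longleftrightarrow> (\<exists>b. b < x) \<and> (\<forall>b<x. \<exists>z. b < z \<and> z < x)"

text \<open>The supremum of the limits strictly below \<open>x\<close>; the bottom element if there are none.\<close>

definition limit_floor :: "'a::wellorder \<Rightarrow> 'a" where
  "limit_floor x = (LEAST z. \<forall>l. order_limit l \<and> l < x \<longrightarrow> l \<le> z)"

definition next_limit :: "'a::wellorder \<Rightarrow> 'a" where
  "next_limit y = (LEAST l. order_limit l \<and> y < l)"

text \<open>The maximum of the first \<open>n\<close> values of an enumeration of \<open>{..<limit_floor y}\<close>, where
  \<open>n\<close> is the index of \<open>y\<close> in an enumeration of \<open>{..<next_limit y}\<close>. As \<open>y\<close> runs through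
  the gap below \<open>next_limit y\<close>, only finitely many \<open>y\<close> have index below a given \<open>n\<close>, so
  these values converge to \<open>limit_floor y\<close> from below.\<close>

definition floor_approx :: "'a::wellorder \<Rightarrow> 'a" where
  "floor_approx y =
     Max (from_nat_into {..<limit_floor y} ` {..to_nat_on {..<next_limit y} y})"

definition counterexample_map :: "'a::wellorder \<Rightarrow> 'a set" where
  "counterexample_map x =
     (if order_limit x then {limit_floor x} else {..floor_approx x} \<union> {x})"

lemma open_atMost_wellorder: "open {..x::'a::{wellorder,linorder_topology}}"
proof (cases "\<exists>z. x < z")
  case True
  define s where "s = (LEAST z. x < z)"
  have "{..x} = {..<s}"
  proof (intro set_eqI iffI)
    fix y assume "y \<in> {..x}"
    then show "y \<in> {..<s}" using True LeastI_ex[of "\<lambda>z. x < z"] by (auto simp: s_def)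
  next
    fix y assume "y \<in> {..<s}"
    then show "y \<in> {..x}" unfolding s_def by (metis lessThan_iff atMost_iff not_less_Least not_le)
  qed
  then show ?thesis by simp
next
  case False
  then have "{..x} = UNIV" by (auto simp: not_less)
  then show ?thesis by simp
qed

lemma open_greaterThanAtMost_wellorder: "open {a<..x::'a::{wellorder,linorder_topology}}"
  unfolding greaterThanAtMost_def by (intro open_Int open_greaterThan open_atMost_wellorder)

lemma open_singleton_if_not_limit:
  fixes x :: "'a::{wellorder,linorder_topology}"
  assumes "\<not> order_limit x"
  shows "open {x}"
proof (cases "\<exists>b. b < x")
  case False
  then have "{x} = {..x}" by (auto simp: not_less antisym)
  then show ?thesis using open_atMost_wellorder by metis
next
  case True
  with assms obtain b where "b < x" "\<not> (\<exists>z. b < z \<and> z < x)" unfolding order_limit_def by auto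
  then have "{x} = {b<..x}" by (auto simp: le_less)
  then show ?thesis using open_greaterThanAtMost_wellorder by metis
qed

lemma finite_to_nat_on_less:
  assumes "countable S"
  shows "finite {y \<in> S. to_nat_on S y < k}"
proof (rule finite_imageD)
  show "finite (to_nat_on S ` {y \<in> S. to_nat_on S y < k})"
    by (rule finite_subset[of _ "{..<k}"]) auto
  show "inj_on (to_nat_on S) {y \<in> S. to_nat_on S y < k}"
    using inj_on_to_nat_on[OF assms] by (rule inj_on_subset) auto
qed

lemma limit_le_limit_floor: "order_limit l \<Longrightarrow> l < x \<Longrightarrow> l \<le> limit_floor x"
proof -
  have "\<forall>l. order_limit l \<and> l < x \<longrightarrow> l \<le> limit_floor x"
    unfolding limit_floor_def by (rule LeastI[of _ x]) auto
  then show "order_limit l \<Longrightarrow> l < x \<Longrightarrow> l \<le> limit_floor x" by blast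
qed

lemma limit_floor_least: "(\<And>l. order_limit l \<Longrightarrow> l < x \<Longrightarrow> l \<le> z) \<Longrightarrow> limit_floor x \<le> z"
  unfolding limit_floor_def by (rule Least_le) blast

lemma limit_floor_le: "limit_floor x \<le> x"
  by (rule limit_floor_least) simp

lemma exists_limit_between:
  assumes "a < limit_floor x"
  shows "\<exists>l. order_limit l \<and> a < l \<and> l < x"
  using limit_floor_least[of x a] assms by (meson not_le)

lemma limit_floor_limit:
  assumes "b < limit_floor x"
  shows "order_limit (limit_floor x)"
  unfolding order_limit_def
proof (intro conjI allI impI)
  show "\<exists>b. b < limit_floor x" using assms by blast
next
  fix a assume a: "a < limit_floor x"
  then obtain l where l: "order_limit l" "a < l" "l < x" using exists_limit_between by blast
  have "l \<le> limit_floor x" using limit_le_limit_floor l by blast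
  then show "\<exists>z. a < z \<and> z < limit_floor x"
    using l a unfolding order_limit_def by (metis le_less)
qed

lemma limit_floor_eq_self:
  assumes "\<And>a. a < x \<Longrightarrow> \<exists>l. order_limit l \<and> a < l \<and> l < x"
  shows "limit_floor x = x"
proof (rule ccontr)
  assume "limit_floor x \<noteq> x"
  then have "limit_floor x < x" using limit_floor_le[of x] by simp
  then obtain l where "order_limit l" "limit_floor x < l" "l < x" using assms by blast
  then show False using limit_le_limit_floor[of l x] by simp
qed

lemma next_limit:
  assumes "order_limit l" "c < l"
  shows "order_limit (next_limit c)" "c < next_limit c"
  using LeastI[of "\<lambda>l. order_limit l \<and> c < l", OF conjI[OF assms]]
  by (simp_all add: next_limit_def)

lemma next_limit_le: "order_limit l \<Longrightarrow> c < l \<Longrightarrow> next_limit c \<le> l"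
  unfolding next_limit_def by (rule Least_le) simp

lemma limit_floor_next_limit:
  assumes "order_limit c" "order_limit l" "c < l"
  shows "limit_floor (next_limit c) = c"
proof (rule antisym)
  show "limit_floor (next_limit c) \<le> c"
    by (rule limit_floor_least) (metis leD next_limit_le not_le)
  show "c \<le> limit_floor (next_limit c)"
    using limit_le_limit_floor next_limit assms by blast
qed

lemma in_gap_below_limit:
  assumes "order_limit \<mu>" "limit_floor \<mu> < y" "y < \<mu>"
  shows "\<not> order_limit y" "next_limit y = \<mu>" "limit_floor y = limit_floor \<mu>"
proof -
  show "\<not> order_limit y" using limit_le_limit_floor[of y \<mu>] assms by auto
  have "\<mu> \<le> l" if "order_limit l" "y < l" for l
  proof (rule ccontr)
    assume "\<not> \<mu> \<le> l"
    then have "l \<le> limit_floor \<mu>" using limit_le_limit_floor[OF that(1)] by simp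
    then show False using that(2) assms(2) by simp
  qed
  then show "next_limit y = \<mu>"
    unfolding next_limit_def using assms by (intro Least_equality) auto
  have "limit_floor y \<le> limit_floor \<mu>"
    using limit_le_limit_floor less_trans[OF _ assms(3)] by (intro limit_floor_least) blast
  moreover have "limit_floor \<mu> \<le> limit_floor y"
  proof (cases "\<exists>b. b < limit_floor \<mu>")
    case True
    then show ?thesis using limit_floor_limit limit_le_limit_floor assms(2) by blast
  qed (auto simp: not_less)
  ultimately show "limit_floor y = limit_floor \<mu>" by simp
qed

lemma floor_approx_less:
  assumes "b < limit_floor y"
  shows "floor_approx y < limit_floor y"
proof -
  have "floor_approx y \<in> from_nat_into {..<limit_floor y} ` {..to_nat_on {..<next_limit y} y}"
    unfolding floor_approx_def by (rule Max_in) auto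
  moreover have "{..<limit_floor y} \<noteq> {}" using assms by auto
  ultimately show ?thesis using from_nat_into[of "{..<limit_floor y}"] by auto
qed

lemma floor_approx_eventually_above:
  assumes \<mu>: "order_limit \<mu>" "limit_floor \<mu> < \<mu>" "countable {..<\<mu>}"
    and \<gamma>: "\<gamma> < limit_floor \<mu>"
  obtains a where "limit_floor \<mu> \<le> a" "a < \<mu>" "\<And>y. a < y \<Longrightarrow> y < \<mu> \<Longrightarrow> \<gamma> < floor_approx y"
proof -
  define c where "c = limit_floor \<mu>"
  obtain \<gamma>' where \<gamma>': "\<gamma> < \<gamma>'" "\<gamma>' < c"
    using limit_floor_limit[OF \<gamma>] \<gamma> unfolding c_def order_limit_def by blast
  have "countable {..<c}" using \<mu> countable_subset[of "{..<c}" "{..<\<mu>}"] by (auto simp: c_def)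
  moreover define k where "k = to_nat_on {..<c} \<gamma>'"
  ultimately have \<gamma>'_k: "from_nat_into {..<c} k = \<gamma>'" using \<gamma>' by simp
  define F where "F = {y \<in> {..<\<mu>}. to_nat_on {..<\<mu>} y < k}"
  have "finite F" unfolding F_def using \<mu>(3) by (rule finite_to_nat_on_less)
  define a where "a = Max (insert c F)"
  have "c \<le> a" "\<And>y. y \<in> F \<Longrightarrow> y \<le> a" unfolding a_def using \<open>finite F\<close> by simp_all
  moreover have "a < \<mu>"
    using Max_in[of "insert c F"] \<open>finite F\<close> \<mu>(2) by (auto simp: a_def c_def F_def)
  moreover have "\<gamma> < floor_approx y" if y: "a < y" "y < \<mu>" for y
  proof -
    have "c < y" using \<open>c \<le> a\<close> y by simp
    then have gap: "next_limit y = \<mu>" "limit_floor y = c"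
      using in_gap_below_limit[OF \<mu>(1) _ y(2)] by (simp_all add: c_def)
    have "y \<notin> F" using y \<open>\<And>y. y \<in> F \<Longrightarrow> y \<le> a\<close> by (meson not_le)
    then have "k \<le> to_nat_on {..<\<mu>} y" using y by (auto simp: F_def)
    then have "\<gamma>' \<in> from_nat_into {..<limit_floor y} ` {..to_nat_on {..<next_limit y} y}"
      using gap \<gamma>'_k by (auto intro!: image_eqI[of _ _ k])
    then have "\<gamma>' \<le> floor_approx y" unfolding floor_approx_def by (intro Max_ge) auto
    then show ?thesis using \<gamma>' by simp
  qed
  ultimately show thesis using that by (simp add: c_def)
qed

lemma counterexample_map_meets_in_gap:
  fixes x :: "'a::{wellorder,linorder_topology}"
  assumes x: "order_limit x" "limit_floor x < x" "countable {..<x}"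
    and U: "open U" "limit_floor x \<in> U"
  shows "\<exists>a<x. \<forall>y. a < y \<and> y < x \<longrightarrow> counterexample_map y \<inter> U \<noteq> {}"
proof (cases "\<exists>b. b < limit_floor x")
  case True
  then obtain \<gamma> where \<gamma>: "\<gamma> < limit_floor x" "{\<gamma><..limit_floor x} \<subseteq> U"
    using open_left[OF U] by blast
  obtain a where a: "limit_floor x \<le> a" "a < x" "\<And>y. a < y \<Longrightarrow> y < x \<Longrightarrow> \<gamma> < floor_approx y"
    using floor_approx_eventually_above[OF x \<gamma>(1)] by blast
  have "counterexample_map y \<inter> U \<noteq> {}" if y: "a < y" "y < x" for y
  proof -
    have "limit_floor x < y" using a y by simp
    note gap = in_gap_below_limit[OF x(1) this y(2)]
    have "floor_approx y \<in> {\<gamma><..limit_floor x}"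
      using floor_approx_less True a y gap by (metis greaterThanAtMost_iff less_imp_le)
    then show ?thesis using \<gamma>(2) gap(1) by (auto simp: counterexample_map_def)
  qed
  then show ?thesis using a(2) by blast
next
  case False
  have "limit_floor x \<in> counterexample_map y" if "limit_floor x < y" "y < x" for y
    using in_gap_below_limit[OF x(1) that] False by (auto simp: counterexample_map_def not_less)
  then show ?thesis using x(2) U(2) by blast
qed

lemma counterexample_map_meets_at_limit_of_limits:
  fixes x :: "'a::{wellorder,linorder_topology}"
  assumes x: "order_limit x" "limit_floor x = x" and U: "open U" "x \<in> U"
  shows "\<exists>a<x. \<forall>y. a < y \<and> y < x \<longrightarrow> counterexample_map y \<inter> U \<noteq> {}"
proof -
  obtain b where "b < x" using x(1) unfolding order_limit_def by blast
  then obtain \<gamma> where \<gamma>: "\<gamma> < x" "{\<gamma><..x} \<subseteq> U" using open_left[OF U] by blast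
  then obtain l where l: "order_limit l" "\<gamma> < l" "l < x" using exists_limit_between x(2) by metis
  have "counterexample_map y \<inter> U \<noteq> {}" if y: "l < y" "y < x" for y
  proof (cases "order_limit y")
    case True
    then have "limit_floor y \<in> {\<gamma><..x}"
      using limit_le_limit_floor[OF l(1) y(1)] limit_floor_le[of y] y l(2) by auto
    then show ?thesis using True \<gamma>(2) by (auto simp: counterexample_map_def)
  next
    case False
    have "y \<in> {\<gamma><..x}" using less_trans[OF l(2) y(1)] y(2) by simp
    then show ?thesis using False \<gamma>(2) by (auto simp: counterexample_map_def)
  qed
  then show ?thesis using l(3) by blast
qed

locale omega1 =
  fixes w1 :: "'a::{wellorder, linorder_topology}"
  assumes top: "\<forall>x. x \<le> w1"
    and uncountable_below: "uncountable {x. x < w1}"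
    and countable_initial: "\<forall>x. x < w1 \<longrightarrow> countable {y. y < x}"
begin

lemma countable_bounded:
  assumes "countable X" "X \<subseteq> {x. x < w1}"
  shows "\<exists>B<w1. \<forall>x\<in>X. x < B"
proof (rule ccontr)
  assume "\<not> ?thesis"
  then have "\<forall>B<w1. \<exists>x\<in>X. B \<le> x" by (meson not_less)
  then have "{x. x < w1} \<subseteq> (\<Union>x\<in>X. insert x {y. y < x})" by (auto simp: le_less)
  moreover have "countable (\<Union>x\<in>X. insert x {y. y < x})"
    using assms countable_initial by (intro countable_UN) auto
  ultimately show False using uncountable_below countable_subset by blast
qed

lemma top_limit: "order_limit w1"
  unfolding order_limit_def
proof (intro conjI allI impI)
  show "\<exists>b. b < w1" using uncountable_below by (metis Collect_empty_eq countable_empty)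
next
  fix b assume b: "b < w1"
  show "\<exists>z. b < z \<and> z < w1"
  proof (rule ccontr)
    assume "\<not> ?thesis"
    then have "{x. x < w1} \<subseteq> insert b {y. y < b}" by (auto simp: not_less le_less)
    moreover have "countable (insert b {y. y < b})" using countable_initial b by auto
    ultimately show False using uncountable_below countable_subset by blast
  qed
qed

lemma iteration_limit:
  assumes h: "\<And>x. x < w1 \<Longrightarrow> x < h x \<and> h x < w1" and "b < w1"
  shows "\<exists>l<w1. order_limit l \<and> (\<forall>n. (h ^^ n) b < l) \<and> (\<forall>a<l. \<exists>n. a < (h ^^ n) b)"
proof -
  define u where "u n = (h ^^ n) b" for n
  have u_below: "u n < w1" for n by (induction n) (simp_all add: u_def assms(2) h)
  have u_inc: "u n < u (Suc n)" for n using h[OF u_below] by (simp add: u_def)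
  obtain B where B: "B < w1" "\<forall>x\<in>range u. x < B"
    using countable_bounded[of "range u"] u_below by auto
  define l where "l = (LEAST z. \<forall>n. u n < z)"
  have above: "\<forall>n. u n < l" unfolding l_def by (rule LeastI[of _ B]) (use B in auto)
  have "l \<le> B" unfolding l_def by (rule Least_le) (use B in auto)
  have cofinal: "\<exists>n. a < u n" if "a < l" for a
  proof -
    have "\<not> (\<forall>n. u n < a)" using that unfolding l_def by (rule not_less_Least)
    then obtain n where "a \<le> u n" by (auto simp: not_less)
    then show ?thesis using u_inc[of n] by (meson le_less_trans)
  qed
  have "order_limit l" unfolding order_limit_def using above cofinal by blast
  then show ?thesis using \<open>l \<le> B\<close> B(1) above cofinal by (intro exI[of _ l]) (auto simp: u_def)
qed

lemma limit_floor_top: "limit_floor w1 = w1"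
proof (rule limit_floor_eq_self)
  fix a assume "a < w1"
  define h where "h x = (SOME z. x < z \<and> z < w1)" for x
  have h: "x < h x \<and> h x < w1" if "x < w1" for x
  proof -
    have "\<exists>z. x < z \<and> z < w1" using top_limit that unfolding order_limit_def by blast
    then show ?thesis unfolding h_def by (rule someI_ex)
  qed
  obtain l where "l < w1" "order_limit l" "\<forall>n. (h ^^ n) a < l"
    using iteration_limit[OF h \<open>a < w1\<close>] by blast
  moreover have "a < l" using \<open>\<forall>n. (h ^^ n) a < l\<close> by (metis funpow_0)
  ultimately show "\<exists>l. order_limit l \<and> a < l \<and> l < w1" by blast
qed

lemma unbounded_limits_accumulate:
  assumes unbounded: "\<forall>B<w1. \<exists>c\<in>S. B \<le> c" and limits: "\<And>c. c \<in> S \<Longrightarrow> order_limit c \<and> c < w1"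
    and "\<delta> < w1"
  shows "\<exists>l<w1. order_limit l \<and> limit_floor l = l \<and> \<delta> < l \<and> (\<forall>a<l. \<exists>c\<in>S. a < c \<and> c < l)"
proof -
  have "\<exists>c\<in>S. x < c" if x: "x < w1" for x
  proof -
    obtain z where "x < z" "z < w1" using top_limit x unfolding order_limit_def by blast
    then show ?thesis using unbounded by (meson less_le_trans)
  qed
  then obtain h where h: "\<And>x. x < w1 \<Longrightarrow> h x \<in> S \<and> x < h x" by metis
  then have "x < h x \<and> h x < w1" if "x < w1" for x using that limits by blast
  then obtain l where l: "l < w1" "order_limit l" "\<forall>n. (h ^^ n) \<delta> < l"
    and cofinal: "\<forall>a<l. \<exists>n. a < (h ^^ n) \<delta>"
    using iteration_limit[of h \<delta>] \<open>\<delta> < w1\<close> by blast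
  have "(h ^^ n) \<delta> < w1" for n using l(1,3) less_trans by blast
  then have iterate: "(h ^^ Suc n) \<delta> \<in> S" "(h ^^ n) \<delta> < (h ^^ Suc n) \<delta>" for n
    using h by auto
  have S_cofinal: "\<forall>a<l. \<exists>c\<in>S. a < c \<and> c < l"
  proof (intro allI impI)
    fix a assume "a < l"
    then obtain n where "a < (h ^^ n) \<delta>" using cofinal by blast
    then show "\<exists>c\<in>S. a < c \<and> c < l" using iterate[of n] l(3) by (meson less_trans)
  qed
  have "limit_floor l = l"
  proof (rule limit_floor_eq_self)
    fix a assume "a < l"
    then obtain c where "c \<in> S" "a < c" "c < l" using S_cofinal by blast
    then show "\<exists>c. order_limit c \<and> a < c \<and> c < l" using limits by blast
  qed
  moreover have "\<delta> < l" using l(3) by (metis funpow_0)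
  ultimately show ?thesis using l(1,2) S_cofinal by blast
qed

lemma counterexample_map_meets_left_of_limit:
  fixes x :: 'a
  assumes x: "order_limit x" and U: "open U" "limit_floor x \<in> U"
  shows "\<exists>a<x. \<forall>y. a < y \<and> y < x \<longrightarrow> counterexample_map y \<inter> U \<noteq> {}"
proof (cases "limit_floor x < x")
  case True
  then have "x \<noteq> w1" using limit_floor_top by auto
  then have "x < w1" using top le_less by blast
  then have "countable {..<x}" using countable_initial by (simp add: lessThan_def)
  then show ?thesis using counterexample_map_meets_in_gap[OF x True _ U] by blast
next
  case False
  then have "limit_floor x = x" using limit_floor_le[of x] by simp
  then show ?thesis
    using counterexample_map_meets_at_limit_of_limits[OF x _ U(1)] U(2) by simp
qed

lemma lower_semicontinuous_counterexample_map:
  "lower_semicontinuous (counterexample_map :: 'a \<Rightarrow> 'a set)"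
  unfolding lower_semicontinuous_def
proof (intro allI impI)
  fix U :: "'a set"
  assume U: "open U"
  let ?V = "{y. counterexample_map y \<inter> U \<noteq> {}}"
  have "\<exists>T. open T \<and> x \<in> T \<and> T \<subseteq> ?V" if x: "x \<in> ?V" for x
  proof (cases "order_limit x")
    case False
    then have "open {x}" by (rule open_singleton_if_not_limit)
    then show ?thesis using x by blast
  next
    case True
    then have "limit_floor x \<in> U" using x by (simp add: counterexample_map_def)
    then obtain a where "a < x" and a: "\<forall>y. a < y \<and> y < x \<longrightarrow> counterexample_map y \<inter> U \<noteq> {}"
      using counterexample_map_meets_left_of_limit[OF True U] by blast
    have "{a<..x} \<subseteq> ?V"
    proof
      fix y assume y: "y \<in> {a<..x}"
      show "y \<in> ?V"
      proof (cases "y = x")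
        case False
        then have "a < y \<and> y < x" using y by auto
        then show ?thesis using a by simp
      qed (use x in simp)
    qed
    moreover have "x \<in> {a<..x}" using \<open>a < x\<close> by simp
    ultimately show ?thesis using open_greaterThanAtMost_wellorder by blast
  qed
  then show "open ?V" by (rule Topological_Spaces.openI)
qed

lemma selection_drops_below:
  fixes f :: "'a \<Rightarrow> 'a"
  assumes f: "continuous_on UNIV f" "\<And>x. f x \<in> counterexample_map x"
    and c: "order_limit c" "c < w1"
  shows "\<exists>y. c < y \<and> y < next_limit c \<and> f y < c"
proof -
  define \<mu> where "\<mu> = next_limit c"
  have \<mu>: "order_limit \<mu>" "c < \<mu>" "limit_floor \<mu> = c"
    using next_limit[OF top_limit c(2)] limit_floor_next_limit[OF c(1) top_limit c(2)]
    by (simp_all add: \<mu>_def)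
  then have "f \<mu> = c" using f(2)[of \<mu>] by (simp add: counterexample_map_def)
  then have "\<mu> \<in> f -` {..c}" by simp
  with \<mu>(2) obtain b where b: "b < \<mu>" "{b<..\<mu>} \<subseteq> f -` {..c}"
    using open_left[OF open_vimage[OF open_atMost_wellorder f(1)]] by blast
  have "max b c < \<mu>" using b(1) \<mu>(2) by simp
  then obtain y where y: "max b c < y" "y < \<mu>" using \<mu>(1) unfolding order_limit_def by blast
  then have "y \<in> {b<..\<mu>}" by simp
  then have "f y \<le> c" using b(2) by blast
  note gap = in_gap_below_limit[OF \<mu>(1) _ y(2), unfolded \<mu>(3)]
  have "floor_approx y < c" using gap floor_approx_less c(1) y(1) unfolding order_limit_def
    by (metis max_less_iff_conj)
  moreover have "f y \<noteq> y" using \<open>f y \<le> c\<close> y by auto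
  ultimately have "f y < c" using f(2)[of y] gap y(1) by (auto simp: counterexample_map_def)
  then show ?thesis using y \<mu>_def by auto
qed

lemma selection_sublevel_bounded:
  fixes f :: "'a \<Rightarrow> 'a"
  assumes f: "continuous_on UNIV f" "\<And>x. f x \<in> counterexample_map x"
    and Y: "\<And>c. order_limit c \<Longrightarrow> c < w1 \<Longrightarrow> c < Y c \<and> Y c < next_limit c"
    and "\<delta> < w1"
  shows "\<exists>B<w1. \<forall>c. order_limit c \<and> c < w1 \<and> f (Y c) \<le> \<delta> \<longrightarrow> c < B"
proof (rule ccontr)
  define S where "S = {c. order_limit c \<and> c < w1 \<and> f (Y c) \<le> \<delta>}"
  assume not_bounded: "\<not> ?thesis"
  have unbounded: "\<forall>B<w1. \<exists>c\<in>S. B \<le> c"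
  proof (intro allI impI)
    fix B assume "B < w1"
    then obtain c where "order_limit c" "c < w1" "f (Y c) \<le> \<delta>" "\<not> c < B"
      using not_bounded by blast
    then show "\<exists>c\<in>S. B \<le> c" unfolding S_def by (auto simp: not_less)
  qed
  have limits: "order_limit c \<and> c < w1" if "c \<in> S" for c using that by (simp add: S_def)
  obtain l where l: "l < w1" "order_limit l" "limit_floor l = l" "\<delta> < l"
    and S_cofinal: "\<forall>a<l. \<exists>c\<in>S. a < c \<and> c < l"
    using unbounded_limits_accumulate[OF unbounded limits \<open>\<delta> < w1\<close>] by blast
  then have "f l = l" using f(2)[of l] by (simp add: counterexample_map_def)
  then have "l \<in> f -` {\<delta><..}" using l(4) by simp
  then obtain a where a: "a < l" "{a<..l} \<subseteq> f -` {\<delta><..}"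
    using open_left[OF open_vimage[OF open_greaterThan f(1)] _ l(4)] by blast
  then obtain c where c: "c \<in> S" "a < c" "c < l" using S_cofinal by blast
  then have "next_limit c \<le> l" using next_limit_le l(2) by blast
  moreover have "c < Y c" "Y c < next_limit c" using Y c(1) unfolding S_def by auto
  ultimately have "Y c \<in> {a<..l}" using c(2) by auto
  then show False using a(2) c(1) unfolding S_def by auto
qed

text \<open>A weak form of the pressing-down lemma.\<close>

lemma regressive_sublevel_unbounded:
  assumes regressive: "\<And>c. order_limit c \<Longrightarrow> c < w1 \<Longrightarrow> g c < c"
  shows "\<exists>\<delta><w1. \<forall>B<w1. \<exists>c. order_limit c \<and> c < w1 \<and> g c \<le> \<delta> \<and> B \<le> c"
proof (rule ccontr)
  assume "\<not> ?thesis"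
  then have bounded: "\<exists>B<w1. \<forall>c. order_limit c \<and> c < w1 \<and> g c \<le> \<delta> \<longrightarrow> c < B"
    if "\<delta> < w1" for \<delta>
    using that by (meson not_le)
  have "\<exists>B. \<delta> < B \<and> B < w1 \<and> (\<forall>c. order_limit c \<and> c < w1 \<and> g c \<le> \<delta> \<longrightarrow> c < B)"
    if \<delta>: "\<delta> < w1" for \<delta>
  proof -
    obtain B where B: "B < w1" "\<forall>c. order_limit c \<and> c < w1 \<and> g c \<le> \<delta> \<longrightarrow> c < B"
      using bounded[OF \<delta>] by blast
    have "max B \<delta> < w1" using B(1) \<delta> by simp
    then obtain z where "max B \<delta> < z" "z < w1" using top_limit unfolding order_limit_def by blast
    then show ?thesis using B(2) by (intro exI[of _ z]) auto
  qed
  then obtain bound where bound: "\<And>\<delta>. \<delta> < w1 \<Longrightarrow> \<delta> < bound \<delta> \<and> bound \<delta> < w1 \<and>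
      (\<forall>c. order_limit c \<and> c < w1 \<and> g c \<le> \<delta> \<longrightarrow> c < bound \<delta>)"
    by metis
  obtain b where "b < w1" using top_limit unfolding order_limit_def by blast
  then obtain l where l: "l < w1" "order_limit l" "\<forall>n. (bound ^^ n) b < l"
    and cofinal: "\<forall>a<l. \<exists>n. a < (bound ^^ n) b"
    using iteration_limit[of bound b] bound by blast
  obtain n where "g l < (bound ^^ n) b" using cofinal regressive l(1,2) by blast
  moreover have "(bound ^^ n) b < w1" using l(1,3) less_trans by blast
  ultimately have "l < bound ((bound ^^ n) b)" using bound l(1,2) less_imp_le by blast
  moreover have "bound ((bound ^^ n) b) < l" using spec[OF l(3), of "Suc n"] by simp
  ultimately show False by simp
qed

lemma no_continuous_selection:
  fixes f :: "'a \<Rightarrow> 'a"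
  assumes f: "continuous_on UNIV f" "\<And>x. f x \<in> counterexample_map x"
  shows False
proof -
  obtain Y where Y: "\<And>c. order_limit c \<Longrightarrow> c < w1 \<Longrightarrow> c < Y c \<and> Y c < next_limit c \<and> f (Y c) < c"
    using selection_drops_below[OF f] by metis
  obtain \<delta> where \<delta>: "\<delta> < w1"
    and unbounded: "\<forall>B<w1. \<exists>c. order_limit c \<and> c < w1 \<and> f (Y c) \<le> \<delta> \<and> B \<le> c"
    using regressive_sublevel_unbounded[of "\<lambda>c. f (Y c)"] Y by blast
  obtain B where "B < w1" "\<forall>c. order_limit c \<and> c < w1 \<and> f (Y c) \<le> \<delta> \<longrightarrow> c < B"
    using selection_sublevel_bounded[OF f _ \<delta>] Y by blast
  then show False using unbounded by (meson leD)
qed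

end

theorem mainTheorem7:
  fixes w1 :: "'a::{wellorder, linorder_topology}"
  assumes top: "\<forall>x. x \<le> w1"
    and uncountable_below_top: "uncountable {x. x < w1}"
    and countable_initial: "\<forall>x. x < w1 \<longrightarrow> countable {y. y < x}"
  shows "\<not> self_selective TYPE('a)"
proof
  interpret omega1 w1 using assms by unfold_locales auto
  assume "self_selective TYPE('a)"
  moreover have "closed (counterexample_map x)" "counterexample_map x \<noteq> {}" for x :: 'a
    by (auto simp: counterexample_map_def)
  ultimately obtain f :: "'a \<Rightarrow> 'a" where "continuous_on UNIV f" "\<forall>x. f x \<in> counterexample_map x"
    using lower_semicontinuous_counterexample_map unfolding self_selective_def by blast
  then show False using no_continuous_selection by blast
qed

end
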